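(* For all $n,m\in\mathbb{N}$, \[ \sum_{j=0}^{n}\sum_{i=0}^{j}\frac{\binom{2n+2-m}{i}}{\binom{2n+1}{j}}=\frac{n+1}{2^{m+1}}\left(2H_{2n+1}-H_n-\sum_{k=1}^{m}\frac{2^{k+1}}{k}\left(\frac{\binom{2n+2-k}{n+1}}{\binom{2n+2}{n+1}}-1\right)\right). \]
   Context: For $x\in\mathbb{C}$ (in particular any integer $x$, possibly negative) and $i\in\mathbb{N}$: $\binom{x}{i}=x(x-1)\cdots(x-i+1)/i!$. $H_n=\sum_{k=1}^{n}\frac1k$ is the $n$-th harmonic number ($H_0=0$). Empty sums are $0$. *)

theory Defs
  imports "HOL-Analysis.Analysis"
begin

end

theory Submission
  imports Defs
begin

text \<open>
  Write \<open>S n x\<close> for the double sum with \<open>x\<close> in place of \<open>2n + 2 - m\<close>. Pascal's rule gives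
  \<open>\<Sum>i\<le>j. (x+1 gchoose i) = 2 \<Sum>i\<le>j. (x gchoose i) - (x gchoose j)\<close>, hence
  \<open>S n (x+1) = 2 S n x - \<Sum>j\<le>n. (x gchoose j) / (2n+1 choose j)\<close>, and the last sum telescopes to
  \<open>(2n+2) (1 - (x gchoose n+1) / (2n+2 choose n+1)) / (2n+2-x)\<close>. Induction on \<open>m\<close> thus
  reduces everything to \<open>m = 0\<close>, i.e. \<open>x = 2n+2\<close>. There, applying Pascal's rule for reciprocals
  of binomial coefficients twice yields
  \<open>S (n+1) (x+2) = (n+2)/(n+1) S n x + (x gchoose n+1) / (2n+3 choose n+1)\<close>,
  and the harmonic-number value of \<open>S n (2n+2)\<close> follows by induction on \<open>n\<close>.
\<close>

definition gchoose_partial_sum :: "'a::field_char_0 \<Rightarrow> nat \<Rightarrow> 'a" where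
  "gchoose_partial_sum x j = (\<Sum>i=0..j. x gchoose i)"

lemma gchoose_partial_sum_0 [simp]: "gchoose_partial_sum x 0 = 1"
  by (simp add: gchoose_partial_sum_def)

lemma gchoose_partial_sum_Suc:
  "gchoose_partial_sum x (Suc j) = gchoose_partial_sum x j + (x gchoose Suc j)"
  by (simp add: gchoose_partial_sum_def)

lemma gchoose_partial_sum_add_1:
  "gchoose_partial_sum (x + 1) j = 2 * gchoose_partial_sum x j - (x gchoose j)"
proof (induction j)
  case (Suc j)
  then show ?case
    using gbinomial_Suc_Suc[of x j] by (simp add: gchoose_partial_sum_Suc)
qed simp

lemma gchoose_partial_sum_add_1_Suc:
  "gchoose_partial_sum (x + 1) (Suc j) = gchoose_partial_sum x (Suc j) + gchoose_partial_sum x j"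
  using gbinomial_Suc_Suc[of x j] by (simp add: gchoose_partial_sum_add_1 gchoose_partial_sum_Suc)

lemma gchoose_partial_sum_add_2_Suc_Suc:
  "gchoose_partial_sum (x + 2) (Suc (Suc j)) =
     gchoose_partial_sum x (Suc (Suc j)) + 2 * gchoose_partial_sum x (Suc j) + gchoose_partial_sum x j"
proof -
  have "x + 2 = (x + 1) + 1" by simp
  then show ?thesis
    by (simp only: gchoose_partial_sum_add_1_Suc) (simp add: gchoose_partial_sum_add_1_Suc)
qed

lemma sum_gchoose_partial_sum_add_2:
  fixes w :: "nat \<Rightarrow> 'a::field_char_0"
  shows "(\<Sum>j=0..n+1. gchoose_partial_sum (x + 2) j * w j) =
     (\<Sum>j=0..n. gchoose_partial_sum x j * (w j + 2 * w (j+1) + w (j+2)))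
     + gchoose_partial_sum x (n+1) * w (n+1) - gchoose_partial_sum x n * w (n+2)"
proof (induction n)
  case 0
  have "gchoose_partial_sum (x + 2) 1 = gchoose_partial_sum x 1 + 2"
    using gchoose_partial_sum_add_1[of "x+1" 1] gchoose_partial_sum_add_1[of x 1]
    by (simp add: gchoose_partial_sum_def algebra_simps)
  then show ?case by (simp add: algebra_simps)
next
  case (Suc n)
  then show ?case
    by (simp add: gchoose_partial_sum_add_2_Suc_Suc algebra_simps)
qed

lemma inverse_binomial_Suc_left:
  assumes "k \<le> N"
  shows "inverse (real (Suc N choose k)) = real (Suc N - k) / real (Suc N) * inverse (real (N choose k))"
proof -
  have "real (Suc N - k) \<noteq> 0" using assms by simp
  then show ?thesis
    unfolding of_nat_binomial_eq_mult_binomial_Suc[OF assms]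
    by (simp add: inverse_mult_distrib inverse_eq_divide del: binomial_Suc_Suc)
qed

lemma inverse_binomial_Suc_Suc:
  "inverse (real (Suc N choose Suc k)) = real (Suc k) / real (Suc N) * inverse (real (N choose k))"
proof -
  have "real (N choose k) = real (Suc k) / real (Suc N) * real (Suc N choose Suc k)"
    using arg_cong[OF Suc_times_binomial[of k N], of real]
    by (simp only: of_nat_mult) (simp add: field_simps del: binomial_Suc_Suc of_nat_Suc)
  then show ?thesis
    by (simp add: inverse_mult_distrib inverse_eq_divide del: binomial_Suc_Suc of_nat_Suc)
qed

lemma inverse_binomial_pascal:
  assumes "k \<le> N"
  shows "1 / real (N choose k) =
    real (N + 1) / real (N + 2) * (1 / real (Suc N choose k) + 1 / real (Suc N choose Suc k))"
proof -
  define r where "r = inverse (real (N choose k))"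
  have "real (Suc N - k) / real (Suc N) * r + real (Suc k) / real (Suc N) * r
      = (real (Suc N - k) + real (Suc k)) / real (Suc N) * r"
    by (simp add: add_divide_distrib distrib_right)
  also have "real (Suc N - k) + real (Suc k) = real (N + 2)"
    using assms by simp
  finally show ?thesis
    unfolding inverse_eq_divide [symmetric] inverse_binomial_Suc_left[OF assms]
      inverse_binomial_Suc_Suc r_def [symmetric]
    by (simp del: of_nat_Suc of_nat_add)
qed

lemma inverse_binomial_pascal2:
  assumes "k \<le> N"
  shows "1 / real (N choose k) = real (N + 1) / real (N + 3) *
    (1 / real (N + 2 choose k) + 2 / real (N + 2 choose (k + 1)) + 1 / real (N + 2 choose (k + 2)))"
proof -
  let ?a = "1 / real (N + 2 choose k)" and ?b = "1 / real (N + 2 choose (k + 1))"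
    and ?c = "1 / real (N + 2 choose (k + 2))"
  have "1 / real (N choose k) =
    real (N + 1) / real (N + 2) * (1 / real (Suc N choose k) + 1 / real (Suc N choose Suc k))"
    by (rule inverse_binomial_pascal[OF assms])
  also have "\<dots> = real (N + 1) / real (N + 2) *
      (real (N + 2) / real (N + 3) * (?a + ?b) + real (N + 2) / real (N + 3) * (?b + ?c))"
    using inverse_binomial_pascal[of k "Suc N"] inverse_binomial_pascal[of "Suc k" "Suc N"] assms
    by (simp del: binomial_Suc_Suc add: numeral_eq_Suc)
  also have "\<dots> = real (N + 1) / real (N + 3) * ((?a + ?b) + (?b + ?c))"
    by (simp only: distrib_left [symmetric] mult.assoc [symmetric]) (simp del: of_nat_add)
  also have "\<dots> = real (N + 1) / real (N + 3) * (?a + 2 * ?b + ?c)"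
    by (simp add: algebra_simps)
  finally show ?thesis by simp
qed

definition binomial_double_sum :: "nat \<Rightarrow> real \<Rightarrow> real" where
  "binomial_double_sum n x = (\<Sum>j=0..n. gchoose_partial_sum x j / real (2*n+1 choose j))"

lemma binomial_double_sum_Suc_add_2:
  "binomial_double_sum (Suc n) (x + 2) =
     real (n + 2) / real (n + 1) * binomial_double_sum n x
     + (x gchoose (n + 1)) / real (2*n+3 choose (n + 1))"
proof -
  define w where "w j = 1 / real (2*n+3 choose j)" for j
  have w_sym: "w (n + 2) = w (n + 1)"
    using binomial_symmetric[of "n+1" "2*n+3"] by (simp add: w_def numeral_eq_Suc)
  have w_pascal: "w j + 2 * w (j+1) + w (j+2) = real (n + 2) / real (n + 1) * (1 / real (2*n+1 choose j))"
    if "j \<le> n" for j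
  proof -
    define r where "r = 1 / real (2*n+1 choose j)"
    have "2*n+1+2 = 2*n+3" "2*n+1+1 = 2*n+2" "2*n+1+3 = 2*n+4" by simp_all
    then have "r = real (2*n+2) / real (2*n+4) * (w j + 2 * w (j+1) + w (j+2))"
      using inverse_binomial_pascal2[of j "2*n+1"] that
      by (simp only: r_def w_def mult_1_right times_divide_eq_right)
    then show ?thesis
      unfolding r_def [symmetric] by (simp add: field_simps)
  qed
  have "2 * Suc n + 1 = 2*n+3" by simp
  then have "binomial_double_sum (Suc n) (x + 2) = (\<Sum>j=0..n+1. gchoose_partial_sum (x + 2) j * w j)"
    by (simp only: binomial_double_sum_def w_def Suc_eq_plus1 times_divide_eq_right mult_1_right)
  also have "\<dots> = (\<Sum>j=0..n. gchoose_partial_sum x j * (w j + 2 * w (j+1) + w (j+2)))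
      + (gchoose_partial_sum x (n+1) - gchoose_partial_sum x n) * w (n+1)"
    unfolding sum_gchoose_partial_sum_add_2 w_sym by (simp add: algebra_simps)
  also have "(\<Sum>j=0..n. gchoose_partial_sum x j * (w j + 2 * w (j+1) + w (j+2))) =
      real (n + 2) / real (n + 1) * binomial_double_sum n x"
    unfolding binomial_double_sum_def sum_distrib_left
  proof (rule sum.cong)
    fix j assume "j \<in> {0..n}"
    then show "gchoose_partial_sum x j * (w j + 2 * w (j+1) + w (j+2)) =
        real (n + 2) / real (n + 1) * (gchoose_partial_sum x j / real (2*n+1 choose j))"
      using w_pascal[of j] by simp
  qed simp
  also have "gchoose_partial_sum x (n+1) - gchoose_partial_sum x n = x gchoose (n + 1)"
    by (simp add: gchoose_partial_sum_Suc)
  finally show ?thesis by (simp add: w_def)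
qed

lemma binomial_double_sum_at_central:
  "binomial_double_sum n (real (2*n+2)) = real (n + 1) / 2 * (2 * harm (2*n+1) - harm n)"
proof (induction n)
  case 0
  show ?case by (simp add: binomial_double_sum_def harm_def)
next
  case (Suc n)
  have ratio: "(real (2*n+2) gchoose (n+1)) / real (2*n+3 choose (n+1)) = real (n + 2) / real (2*n+3)"
  proof -
    define c where "c = real (2*n+2 choose (n+1))"
    have "c \<noteq> 0" by (simp add: c_def del: binomial_Suc_Suc)
    have "Suc (2*n+2) = 2*n+3" "2*n+3 - (n+1) = n+2" by simp_all
    then have "inverse (real (2*n+3 choose (n+1))) = real (n+2) / real (2*n+3) * inverse c"
      using inverse_binomial_Suc_left[of "n+1" "2*n+2"] by (simp only: c_def)
    with \<open>c \<noteq> 0\<close> show ?thesis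
      unfolding binomial_gbinomial [symmetric] c_def [symmetric] divide_inverse by simp
  qed
  have harm_step: "2 * harm (2 * Suc n + 1) - harm (Suc n) = 2 * harm (2*n+1) - harm n + 2 / real (2*n+3)"
  proof -
    have "2 * Suc n + 1 = Suc (Suc (2*n+1))" by simp
    then have "harm (2 * Suc n + 1) = harm (2*n+1) + inverse (real (2*n+2)) + inverse (real (2*n+3))"
      by (simp add: harm_Suc)
    moreover have "harm (Suc n) = harm n + inverse (real (n+1))"
      by (simp add: harm_Suc)
    moreover have "2 * inverse (real (2*n+2)) = inverse (real (n+1))"
      by (simp add: field_simps)
    ultimately show ?thesis by (simp add: divide_inverse algebra_simps)
  qed
  have "binomial_double_sum (Suc n) (real (2 * Suc n + 2)) = binomial_double_sum (Suc n) (real (2*n+2) + 2)"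
    by (simp add: algebra_simps)
  also have "\<dots> = real (n + 2) / 2 * (2 * harm (2*n+1) - harm n) + real (n + 2) / real (2*n+3)"
  proof -
    have "real (n + 2) / real (n + 1) * (real (n + 1) / 2 * X) = real (n + 2) / 2 * X" for X
      by (simp del: of_nat_add)
    then show ?thesis unfolding binomial_double_sum_Suc_add_2 Suc.IH ratio by simp
  qed
  also have "\<dots> = real (Suc n + 1) / 2 * (2 * harm (2 * Suc n + 1) - harm (Suc n))"
  proof -
    have half: "a / 2 * (2 / b) = a / b" for a b :: real
      by simp
    show ?thesis unfolding harm_step distrib_left half by simp
  qed
  finally show ?case .
qed

lemma gchoose_div_binomial_telescope_step:
  fixes x :: real
  assumes "K \<le> N"
  shows "(real (N + 1) - x) * ((x gchoose K) / real (N choose K)) =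
    real (N + 1) * ((x gchoose K) / real (Suc N choose K) - (x gchoose Suc K) / real (Suc N choose Suc K))"
proof -
  define r where "r = inverse (real (N choose K))"
  have gchoose_Suc: "(x gchoose Suc K) = (x - real K) / real (Suc K) * (x gchoose K)"
    using gbinomial_mult_1[of x K] by (simp add: field_simps)
  have "real (Suc N - K) - (x - real K) = real (N + 1) - x"
    using assms by (simp add: of_nat_diff)
  then show ?thesis
    unfolding divide_inverse inverse_binomial_Suc_left[OF assms] inverse_binomial_Suc_Suc
      r_def [symmetric] gchoose_Suc
    by (simp add: field_simps del: of_nat_Suc of_nat_add)
qed

lemma gchoose_div_binomial_telescope:
  fixes x :: real
  assumes "K \<le> N + 1"
  shows "(real (N + 1) - x) * (\<Sum>j<K. (x gchoose j) / real (N choose j)) =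
    real (N + 1) * (1 - (x gchoose K) / real (Suc N choose K))"
  using assms
proof (induction K)
  case (Suc K)
  then have "K \<le> N" by simp
  show ?case
    unfolding sum.lessThan_Suc distrib_left Suc.IH[OF Suc_leD[OF Suc.prems]]
      gchoose_div_binomial_telescope_step[OF \<open>K \<le> N\<close>]
    by (simp add: algebra_simps)
qed simp

lemma binomial_double_sum_add_1:
  "binomial_double_sum n (x + 1) = 2 * binomial_double_sum n x - (\<Sum>j=0..n. (x gchoose j) / real (2*n+1 choose j))"
  unfolding binomial_double_sum_def gchoose_partial_sum_add_1
  by (simp add: diff_divide_distrib sum_subtractf sum_distrib_left)

lemma binomial_double_sum_recurrence:
  assumes "x \<noteq> real (2*n+2)"
  shows "binomial_double_sum n x = (binomial_double_sum n (x + 1)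
    + real (2*n+2) * (1 - (x gchoose (n+1)) / real (2*n+2 choose (n+1))) / (real (2*n+2) - x)) / 2"
proof -
  have "(real (2*n+2) - x) * (\<Sum>j=0..n. (x gchoose j) / real (2*n+1 choose j)) =
      real (2*n+2) * (1 - (x gchoose (n+1)) / real (2*n+2 choose (n+1)))"
    using gchoose_div_binomial_telescope[of "n+1" "2*n+1" x]
    by (simp add: atLeast0AtMost lessThan_Suc_atMost [symmetric] del: binomial_Suc_Suc)
  with assms show ?thesis
    unfolding binomial_double_sum_add_1 by (simp add: field_simps)
qed

theorem mainTheorem8:
  fixes n m :: nat
  shows "(\<Sum>j=0..n. \<Sum>i=0..j.
            ((of_int (2 * int n + 2 - int m) :: real) gchoose i) / real ((2*n+1) choose j))
       = real (n+1) / 2 ^ (m+1) *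
           (2 * harm (2*n+1) - harm n
            - (\<Sum>k=1..m. 2 ^ (k+1) / real k *
                 (((of_int (2 * int n + 2 - int k) :: real) gchoose (n+1))
                    / real ((2*n+2) choose (n+1)) - 1)))"
  unfolding sum_divide_distrib [symmetric] gchoose_partial_sum_def [symmetric]
    binomial_double_sum_def [symmetric]
proof (induction m)
  case 0
  have "(of_int (2 * int n + 2 - int 0) :: real) = real (2*n+2)" by simp
  then show ?case by (simp only: binomial_double_sum_at_central) simp
next
  case (Suc m)
  define y :: real where "y = of_int (2 * int n + 2 - int (Suc m))"
  define c where "c = (y gchoose (n+1)) / real (2*n+2 choose (n+1))"
  define A :: real where "A = 2 * harm (2*n+1) - harm n"
  define T where "T = (\<Sum>k=1..m. 2 ^ (k+1) / real k *
    (((of_int (2 * int n + 2 - int k) :: real) gchoose (n+1)) / real ((2*n+2) choose (n+1)) - 1))"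
  have T_Suc: "(\<Sum>k=1..Suc m. 2 ^ (k+1) / real k *
    (((of_int (2 * int n + 2 - int k) :: real) gchoose (n+1)) / real ((2*n+2) choose (n+1)) - 1))
    = T + 2 ^ (Suc m + 1) / real (Suc m) * (c - 1)"
    unfolding T_def c_def y_def by (simp only: sum.cl_ivl_Suc One_nat_def Suc_less_eq not_less_zero if_False)
  have y_ne: "y \<noteq> real (2*n+2)" and y_Suc: "y + 1 = of_int (2 * int n + 2 - int m)"
    and y_dist: "real (2*n+2) - y = real (Suc m)"
    by (simp_all add: y_def)
  have "binomial_double_sum n y =
      (binomial_double_sum n (of_int (2 * int n + 2 - int m)) + real (2*n+2) * (1 - c) / real (Suc m)) / 2"
    using binomial_double_sum_recurrence[OF y_ne] unfolding y_Suc y_dist c_def [symmetric] .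
  also have "\<dots> = (real (n+1) / 2 ^ (m+1) * (A - T) + real (2*n+2) * (1 - c) / real (Suc m)) / 2"
    unfolding Suc.IH A_def T_def ..
  also have "\<dots> = real (n+1) / 2 ^ (Suc m + 1) * (A - (T + 2 ^ (Suc m + 1) / real (Suc m) * (c - 1)))"
    by (simp add: field_simps)
  finally show ?case unfolding y_def T_Suc A_def .
qed

end
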